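(* Let $G=(I_0\cup I_1,E)$ be a bipartite graph with bipartition $(I_0,I_1)$ such that $d(v)\ge 3$ for every $v\in I_1$, and let $d_1,d_2$ be real numbers with $0<d_1<d_2$. Then $G$ admits a proper $\{-d_1,0,d_2\}$-edge weighting.
   Context: All graphs are simple, finite and undirected; $d(v)$ denotes the degree of $v$. For a graph $G=(V,E)$ and a set $Q\subset\mathbb{R}$, a $Q$-edge weighting is a map $w:E\to Q$. The weighted degree of a vertex $v$ is $d_w(v)=\sum_{e\ni v}w(e)$. An edge $uv$ is a conflict if $d_w(u)=d_w(v)$, and $w$ is proper if it has no conflicts. *)

theory Defs
  imports Complex_Main
begin

definition simple_graph :: "'a set \<Rightarrow> 'a set set \<Rightarrow> bool" where
  "simple_graph V E \<longleftrightarrow> finite V \<and> (\<forall>e\<in>E. \<exists>u v. u \<in> V \<and> v \<in> V \<and> u \<noteq> v \<and> e = {u, v})"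

definition degree :: "'a set set \<Rightarrow> 'a \<Rightarrow> nat" where
  "degree E v = card {e \<in> E. v \<in> e}"

definition bipartite_with :: "'a set \<Rightarrow> 'a set \<Rightarrow> 'a set set \<Rightarrow> bool" where
  "bipartite_with I0 I1 E \<longleftrightarrow> simple_graph (I0 \<union> I1) E \<and> I0 \<inter> I1 = {} \<and>
     (\<forall>e\<in>E. \<exists>u v. u \<in> I0 \<and> v \<in> I1 \<and> e = {u, v})"

definition weighted_degree :: "'a set set \<Rightarrow> ('a set \<Rightarrow> real) \<Rightarrow> 'a \<Rightarrow> real" where
  "weighted_degree E w v = (\<Sum>e\<in>{e \<in> E. v \<in> e}. w e)"

definition edge_weighting :: "'a set set \<Rightarrow> real set \<Rightarrow> ('a set \<Rightarrow> real) \<Rightarrow> bool" where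
  "edge_weighting E Q w \<longleftrightarrow> (\<forall>e\<in>E. w e \<in> Q)"

definition proper_weighting :: "'a set set \<Rightarrow> ('a set \<Rightarrow> real) \<Rightarrow> bool" where
  "proper_weighting E w \<longleftrightarrow>
     (\<forall>u v. {u, v} \<in> E \<longrightarrow> u \<noteq> v \<longrightarrow> weighted_degree E w u \<noteq> weighted_degree E w v)"

end

theory Submission
  imports Defs
begin

text \<open>
  Call a vertex set even if it meets every connected component in an even number of vertices.
  Choose R \<subseteq> I1 such that I1 - R is even and no two vertices of R have a common neighbour:
  a smallest R with the first property has the second, because removing two vertices with a
  common neighbour (hence in the same component) from R keeps I1 - R even. An even set T is the
  set of odd-degree vertices of some subgraph S (a T-join). Weight the edges at R by -d1, the
  remaining edges of S by d2 and all other edges by 0. A vertex of R then has weighted degree at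
  most -3 d1 and a vertex of I1 - R an odd multiple of d2, while a vertex of I0 has at most one
  edge at R and thus gets either an even multiple of d2 or -d1 plus a multiple of d2, and
  0 < d1 < d2 separates these values.
\<close>

text \<open>The sets Z with edge_closed E Z are exactly the unions of connected components.\<close>
definition edge_closed :: "'a set set \<Rightarrow> 'a set \<Rightarrow> bool" where
  "edge_closed E Z \<longleftrightarrow> (\<forall>e\<in>E. e \<subseteq> Z \<or> e \<inter> Z = {})"

definition even_on_components :: "'a set set \<Rightarrow> 'a set \<Rightarrow> bool" where
  "even_on_components E T \<longleftrightarrow> (\<forall>Z. edge_closed E Z \<longrightarrow> even (card (T \<inter> Z)))"

definition odd_vertices :: "'a set set \<Rightarrow> 'a set" where
  "odd_vertices S = {x. odd (card {e\<in>S. x \<in> e})}"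

definition no_common_neighbour :: "'a set set \<Rightarrow> 'a set \<Rightarrow> bool" where
  "no_common_neighbour E R \<longleftrightarrow>
     (\<forall>x r1 r2. r1 \<in> R \<longrightarrow> r2 \<in> R \<longrightarrow> {x, r1} \<in> E \<longrightarrow> {x, r2} \<in> E \<longrightarrow> r1 = r2)"

lemma even_card_sym_diff_iff:
  assumes "finite A" "finite B"
  shows "even (card (sym_diff A B)) \<longleftrightarrow> (even (card A) \<longleftrightarrow> even (card B))"
proof -
  have "card A + card B = card (A \<union> B) + card (A \<inter> B)"
    using assms by (rule card_Un_Int)
  moreover have "card (A \<union> B) = card (sym_diff A B) + card (A \<inter> B)"
    using assms by (subst card_Un_disjoint[symmetric]) (auto intro: arg_cong[where f = card])
  ultimately show ?thesis by presburger
qed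

lemma even_card_doubleton_Int_iff:
  assumes "u \<noteq> v"
  shows "even (card ({u, v} \<inter> Z)) \<longleftrightarrow> (u \<in> Z \<longleftrightarrow> v \<in> Z)"
  using assms by (cases "u \<in> Z"; cases "v \<in> Z") (auto simp: Int_insert_left)

lemma edge_closed_insert_iff:
  "edge_closed (insert {u, v} F) Z \<longleftrightarrow> edge_closed F Z \<and> (u \<in> Z \<longleftrightarrow> v \<in> Z)"
  by (auto simp: edge_closed_def)

lemma edge_closed_sym_diff:
  "edge_closed F Z \<Longrightarrow> edge_closed F Z' \<Longrightarrow> edge_closed F (sym_diff Z Z')"
  unfolding edge_closed_def by blast

lemma even_on_components_empty_iff: "even_on_components {} T \<longleftrightarrow> T = {}"
proof
  assume even: "even_on_components {} T"
  show "T = {}"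
  proof (rule ccontr)
    assume "T \<noteq> {}"
    then obtain x where "T \<inter> {x} = {x}" by blast
    moreover have "edge_closed {} {x}" by (simp add: edge_closed_def)
    ultimately show False using even by (force simp: even_on_components_def)
  qed
qed (simp add: even_on_components_def)

lemma even_on_components_sym_diff:
  assumes "finite A" "finite B" "even_on_components E A" "even_on_components E B"
  shows "even_on_components E (sym_diff A B)"
  unfolding even_on_components_def
proof (intro allI impI)
  fix Z assume "edge_closed E Z"
  moreover have "sym_diff A B \<inter> Z = sym_diff (A \<inter> Z) (B \<inter> Z)" by blast
  ultimately show "even (card (sym_diff A B \<inter> Z))"
    using assms even_card_sym_diff_iff[of "A \<inter> Z" "B \<inter> Z"]
    by (simp add: even_on_components_def)
qed

lemma even_on_components_doubleton:
  assumes "u \<noteq> v" "\<And>Z. edge_closed E Z \<Longrightarrow> u \<in> Z \<longleftrightarrow> v \<in> Z"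
  shows "even_on_components E {u, v}"
  using assms by (simp add: even_on_components_def even_card_doubleton_Int_iff)

lemma odd_vertices_insert:
  assumes "finite S" "e \<notin> S"
  shows "odd_vertices (insert e S) = sym_diff (odd_vertices S) e"
proof -
  have "odd (card {f \<in> insert e S. x \<in> f}) \<longleftrightarrow> (odd (card {f \<in> S. x \<in> f}) \<noteq> (x \<in> e))" for x
  proof (cases "x \<in> e")
    case True
    then have "{f \<in> insert e S. x \<in> f} = insert e {f \<in> S. x \<in> f}" by auto
    then show ?thesis using assms True by simp
  next
    case False
    then have "{f \<in> insert e S. x \<in> f} = {f \<in> S. x \<in> f}" by auto
    then show ?thesis using False by simp
  qed
  then show ?thesis by (auto simp: odd_vertices_def)
qed

lemma even_on_components_delete_edge:
  assumes "finite T" "u \<noteq> v" and even: "even_on_components (insert {u, v} F) T"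
    and Z: "edge_closed F Z" "odd (card (T \<inter> Z))"
  shows "even_on_components F (sym_diff T {u, v})"
  unfolding even_on_components_def
proof (intro allI impI)
  have even_T: "even (card (T \<inter> Y))" if "edge_closed F Y" "u \<in> Y \<longleftrightarrow> v \<in> Y" for Y
    using even that by (simp add: even_on_components_def edge_closed_insert_iff)
  fix Z' assume Z': "edge_closed F Z'"
  have "even (card (T \<inter> Z')) \<longleftrightarrow> (u \<in> Z' \<longleftrightarrow> v \<in> Z')"
  proof (cases "u \<in> Z' \<longleftrightarrow> v \<in> Z'")
    case True
    then show ?thesis using even_T Z' by blast
  next
    case False
    \<comment> \<open>Z separates u and v as well, so Z and Z' meet T with the same parity.\<close>
    have "u \<in> Z \<longleftrightarrow> v \<notin> Z" using even_T[OF Z(1)] Z(2) by blast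
    then have "even (card (T \<inter> sym_diff Z Z'))"
      using False Z' Z(1) by (intro even_T edge_closed_sym_diff) blast+
    moreover have "T \<inter> sym_diff Z Z' = sym_diff (T \<inter> Z) (T \<inter> Z')" by blast
    ultimately have "odd (card (T \<inter> Z'))"
      using Z(2) even_card_sym_diff_iff[of "T \<inter> Z" "T \<inter> Z'"] \<open>finite T\<close> by simp
    then show ?thesis using False by blast
  qed
  moreover have "sym_diff T {u, v} \<inter> Z' = sym_diff (T \<inter> Z') ({u, v} \<inter> Z')" by blast
  ultimately show "even (card (sym_diff T {u, v} \<inter> Z'))"
    using even_card_sym_diff_iff[of "T \<inter> Z'" "{u, v} \<inter> Z'"] even_card_doubleton_Int_iff[OF \<open>u \<noteq> v\<close>]
      \<open>finite T\<close> by simp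
qed

lemma exists_subgraph_with_odd_vertices:
  assumes "finite E" "\<forall>e\<in>E. \<exists>u v. u \<noteq> v \<and> e = {u, v}" "finite T" "even_on_components E T"
  shows "\<exists>S\<subseteq>E. odd_vertices S = T"
  using assms
proof (induction E arbitrary: T rule: finite_induct)
  case empty
  then have "T = {}" by (simp add: even_on_components_empty_iff)
  then show ?case by (simp add: odd_vertices_def)
next
  case (insert e F)
  obtain u v where "u \<noteq> v" and e: "e = {u, v}" using insert.prems(1) by blast
  have IH: "\<exists>S\<subseteq>F. odd_vertices S = T'" if "finite T'" "even_on_components F T'" for T'
    by (rule insert.IH) (use insert.prems(1) that in auto)
  show ?case
  proof (cases "even_on_components F T")
    case True
    then obtain S where "S \<subseteq> F" "odd_vertices S = T"
      using IH[OF insert.prems(2)] by auto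
    then show ?thesis by (intro exI[of _ S]) auto
  next
    case False
    then obtain Z where Z: "edge_closed F Z" "odd (card (T \<inter> Z))"
      by (auto simp: even_on_components_def)
    have "finite (sym_diff T e)" using insert.prems(2) e by simp
    moreover have "even_on_components F (sym_diff T e)"
      using insert.prems(3) unfolding e
      by (rule even_on_components_delete_edge[OF insert.prems(2) \<open>u \<noteq> v\<close> _ Z])
    ultimately obtain S where S: "S \<subseteq> F" "odd_vertices S = sym_diff T e"
      using IH by meson
    have "finite S" using S(1) insert.hyps(1) by (rule finite_subset)
    moreover have "e \<notin> S" using S(1) insert.hyps(2) by blast
    ultimately have "odd_vertices (insert e S) = sym_diff (sym_diff T e) e"
      using S(2) by (simp add: odd_vertices_insert)
    also have "\<dots> = T" by blast
    finally show ?thesis using S(1) by (intro exI[of _ "insert e S"]) auto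
  qed
qed

lemma edge_closed_edge_iff:
  assumes "edge_closed E Z" "{u, v} \<in> E"
  shows "u \<in> Z \<longleftrightarrow> v \<in> Z"
proof -
  have "{u, v} \<subseteq> Z \<or> {u, v} \<inter> Z = {}" using assms unfolding edge_closed_def by (rule bspec)
  then show ?thesis by auto
qed

lemma exists_no_common_neighbour_even_remainder:
  assumes "finite T"
  shows "\<exists>R\<subseteq>T. even_on_components E (T - R) \<and> no_common_neighbour E R"
proof -
  define P where "P R \<longleftrightarrow> R \<subseteq> T \<and> even_on_components E (T - R)" for R
  have "P T" by (simp add: P_def even_on_components_def)
  then obtain R where PR: "P R" and min: "\<And>R'. P R' \<Longrightarrow> card R \<le> card R'"
    using ex_has_least_nat[of P T card] by metis
  have "r1 = r2" if r: "r1 \<in> R" "r2 \<in> R" "{x, r1} \<in> E" "{x, r2} \<in> E" for x r1 r2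
  proof (rule ccontr)
    assume "r1 \<noteq> r2"
    have fin: "finite (T - R)" "finite R"
      using assms PR by (auto simp: P_def intro: finite_subset[OF _ assms])
    have "even_on_components E {r1, r2}"
      using \<open>r1 \<noteq> r2\<close> edge_closed_edge_iff[OF _ r(3)] edge_closed_edge_iff[OF _ r(4)]
      by (intro even_on_components_doubleton) blast+
    then have "even_on_components E (sym_diff (T - R) {r1, r2})"
      using fin PR by (intro even_on_components_sym_diff) (auto simp: P_def)
    moreover have "sym_diff (T - R) {r1, r2} = T - (R - {r1, r2})"
      using r(1,2) PR by (auto simp: P_def)
    ultimately have "P (R - {r1, r2})" using PR by (auto simp: P_def)
    moreover have "card (R - {r1, r2}) < card R"
      using r(1,2) fin(2) by (intro psubset_card_mono) auto
    ultimately show False using min by fastforce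
  qed
  then show ?thesis using PR by (auto simp: P_def no_common_neighbour_def)
qed

lemma bipartite_with_finite_edges:
  assumes "bipartite_with I0 I1 E"
  shows "finite E"
proof -
  have "finite (I0 \<union> I1)" "E \<subseteq> Pow (I0 \<union> I1)"
    using assms by (auto simp: bipartite_with_def simple_graph_def)
  then show ?thesis by (meson finite_Pow_iff finite_subset)
qed

lemma bipartite_with_edges_doubleton:
  "bipartite_with I0 I1 E \<Longrightarrow> \<forall>e\<in>E. \<exists>u v. u \<noteq> v \<and> e = {u, v}"
  by (fastforce simp: bipartite_with_def simple_graph_def)

lemma bipartite_with_incident_edge:
  assumes "bipartite_with I0 I1 E" "e \<in> E" "x \<in> e"
  shows "x \<in> I0 \<Longrightarrow> \<exists>y\<in>I1. e = {x, y}" and "x \<in> I1 \<Longrightarrow> \<exists>y\<in>I0. e = {y, x}"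
  using assms by (auto simp: bipartite_with_def)

definition parity_weighting :: "real \<Rightarrow> real \<Rightarrow> 'a set \<Rightarrow> 'a set set \<Rightarrow> 'a set \<Rightarrow> real" where
  "parity_weighting d1 d2 R S e = (if e \<inter> R \<noteq> {} then - d1 else if e \<in> S then d2 else 0)"

lemma sum_if_const_eq_card:
  fixes c :: "'b::comm_semiring_1"
  shows "finite A \<Longrightarrow> (\<Sum>x\<in>A. if P x then c else 0) = c * of_nat (card {x\<in>A. P x})"
  by (simp add: sum.inter_filter[symmetric] mult.commute)

lemma weighted_degree_parity_weighting:
  assumes "finite E" "S \<subseteq> E"
  shows "weighted_degree E (parity_weighting d1 d2 R S) y =
    - d1 * card {e\<in>E. y \<in> e \<and> e \<inter> R \<noteq> {}} + d2 * card {e\<in>S. y \<in> e \<and> e \<inter> R = {}}"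
proof -
  let ?A = "{e\<in>E. y \<in> e}"
  have fin: "finite ?A" using assms(1) by simp
  have "weighted_degree E (parity_weighting d1 d2 R S) y =
      (\<Sum>e\<in>?A. if e \<inter> R \<noteq> {} then - d1 else 0) + (\<Sum>e\<in>?A. if e \<inter> R = {} \<and> e \<in> S then d2 else 0)"
    unfolding weighted_degree_def parity_weighting_def sum.distrib[symmetric]
    by (rule sum.cong) auto
  also have "\<dots> = - d1 * card {e\<in>?A. e \<inter> R \<noteq> {}} + d2 * card {e\<in>?A. e \<inter> R = {} \<and> e \<in> S}"
    by (simp only: sum_if_const_eq_card[OF fin])
  also have "{e\<in>?A. e \<inter> R \<noteq> {}} = {e\<in>E. y \<in> e \<and> e \<inter> R \<noteq> {}}"
    by blast
  also have "{e\<in>?A. e \<inter> R = {} \<and> e \<in> S} = {e\<in>S. y \<in> e \<and> e \<inter> R = {}}"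
    using assms(2) by blast
  finally show ?thesis .
qed

lemma parity_weights_differ:
  fixes d1 d2 :: real and k m c :: nat
  assumes "0 < d1" "d1 < d2" "k \<le> 1" "k = 0 \<Longrightarrow> even m"
  shows "odd c \<Longrightarrow> - d1 * k + d2 * m \<noteq> d2 * c"
    and "3 \<le> c \<Longrightarrow> - d1 * k + d2 * m \<noteq> - d1 * c"
proof -
  assume "odd c"
  show "- d1 * k + d2 * m \<noteq> d2 * c"
  proof (cases "k = 0")
    case True
    then have "m \<noteq> c" using assms(4) \<open>odd c\<close> by blast
    then show ?thesis using True assms(1,2) by simp
  next
    case False
    then have "k = 1" using assms(3) by simp
    show ?thesis
    proof (cases "m \<le> c")
      case True
      then have "d2 * m \<le> d2 * c" using assms(1,2) by simp
      then show ?thesis using \<open>k = 1\<close> assms(1) by simp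
    next
      case False
      then have "d2 * (c + 1) \<le> d2 * m" using assms(1,2) by simp
      then show ?thesis using \<open>k = 1\<close> assms(2) by (simp add: algebra_simps)
    qed
  qed
next
  assume "3 \<le> c"
  have "- d1 * c \<le> - 3 * d1" using \<open>3 \<le> c\<close> assms(1) by simp
  moreover have "d1 * k \<le> d1" using assms(1,3) by simp
  moreover have "0 \<le> d2 * m" using assms(1,2) by simp
  ultimately show "- d1 * k + d2 * m \<noteq> - d1 * c" using assms(1) by linarith
qed

context
  fixes I0 I1 :: "'a set" and E :: "'a set set" and R :: "'a set" and S :: "'a set set"
    and d1 d2 :: real
  assumes bipartite: "bipartite_with I0 I1 E"
    and R_subset: "R \<subseteq> I1" and R_sparse: "no_common_neighbour E R"
    and S_subset: "S \<subseteq> E" and S_odd: "odd_vertices S = I1 - R"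
begin

private lemma weighted_degree_eq:
  "weighted_degree E (parity_weighting d1 d2 R S) y =
    - d1 * card {e\<in>E. y \<in> e \<and> e \<inter> R \<noteq> {}} + d2 * card {e\<in>S. y \<in> e \<and> e \<inter> R = {}}"
  using bipartite_with_finite_edges[OF bipartite] S_subset by (rule weighted_degree_parity_weighting)

lemma weighted_degree_in_R:
  assumes "y \<in> R"
  shows "weighted_degree E (parity_weighting d1 d2 R S) y = - d1 * degree E y"
proof -
  have "{e\<in>E. y \<in> e \<and> e \<inter> R \<noteq> {}} = {e\<in>E. y \<in> e}"
    and "{e\<in>S. y \<in> e \<and> e \<inter> R = {}} = {}"
    using assms by auto
  then show ?thesis unfolding weighted_degree_eq degree_def by (simp only:) simp
qed

lemma weighted_degree_in_I1_minus_R: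
  assumes "y \<in> I1 - R"
  shows "\<exists>c::nat. odd c \<and> weighted_degree E (parity_weighting d1 d2 R S) y = d2 * c"
proof -
  have "e \<inter> R = {}" if e: "e \<in> E" "y \<in> e" for e
  proof -
    obtain x where "x \<in> I0" "e = {x, y}"
      using bipartite_with_incident_edge(2)[OF bipartite e] assms by blast
    moreover have "I0 \<inter> I1 = {}" using bipartite by (simp add: bipartite_with_def)
    ultimately show ?thesis using assms R_subset by blast
  qed
  then have "{e\<in>E. y \<in> e \<and> e \<inter> R \<noteq> {}} = {}" "{e\<in>S. y \<in> e \<and> e \<inter> R = {}} = {e\<in>S. y \<in> e}"
    using S_subset by blast+
  moreover have "odd (card {e\<in>S. y \<in> e})"
    using assms S_odd by (simp add: odd_vertices_def set_eq_iff)
  ultimately show ?thesis unfolding weighted_degree_eq by (simp only:) auto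
qed

lemma weighted_degree_in_I0:
  assumes "y \<in> I0"
  shows "\<exists>(k::nat) (m::nat). k \<le> 1 \<and> (k = 0 \<longrightarrow> even m) \<and>
    weighted_degree E (parity_weighting d1 d2 R S) y = - d1 * k + d2 * m"
proof -
  let ?K = "{e\<in>E. y \<in> e \<and> e \<inter> R \<noteq> {}}"
  have "y \<notin> I1" using assms bipartite by (auto simp: bipartite_with_def)
  have R_edge: "\<exists>r\<in>R. e = {y, r}" if e: "e \<in> E" "y \<in> e" "e \<inter> R \<noteq> {}" for e
  proof -
    obtain r where "e = {y, r}"
      using bipartite_with_incident_edge(1)[OF bipartite e(1,2) assms] by blast
    then show ?thesis using e(3) \<open>y \<notin> I1\<close> R_subset by auto
  qed
  have "e = e'" if K: "e \<in> ?K" "e' \<in> ?K" for e e'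
  proof -
    obtain r where r: "r \<in> R" "e = {y, r}" using R_edge K(1) by blast
    obtain r' where r': "r' \<in> R" "e' = {y, r'}" using R_edge K(2) by blast
    have "r = r'"
      using R_sparse[unfolded no_common_neighbour_def, rule_format, of r r' y] r r' K by simp
    then show "e = e'" using r r' by simp
  qed
  moreover have "finite ?K" using bipartite_with_finite_edges[OF bipartite] by simp
  ultimately have "card ?K \<le> 1" by (simp add: card_le_Suc0_iff_eq)
  moreover have "even (card {e\<in>S. y \<in> e \<and> e \<inter> R = {}})" if "card ?K = 0"
  proof -
    have "?K = {}" using that bipartite_with_finite_edges[OF bipartite] by simp
    then have "{e\<in>S. y \<in> e \<and> e \<inter> R = {}} = {e\<in>S. y \<in> e}" using S_subset by blast
    moreover have "y \<notin> odd_vertices S" using \<open>y \<notin> I1\<close> S_odd by simp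
    ultimately show ?thesis by (simp add: odd_vertices_def)
  qed
  ultimately show ?thesis unfolding weighted_degree_eq
    by (intro exI[of _ "card ?K"] exI[of _ "card {e\<in>S. y \<in> e \<and> e \<inter> R = {}}"]) simp
qed

lemma proper_parity_weighting:
  assumes "\<forall>v\<in>I1. degree E v \<ge> 3" "0 < d1" "d1 < d2"
  shows "proper_weighting E (parity_weighting d1 d2 R S)"
  unfolding proper_weighting_def
proof (intro allI impI)
  let ?d = "weighted_degree E (parity_weighting d1 d2 R S)"
  have differ: "?d x \<noteq> ?d y" if "x \<in> I0" "y \<in> I1" for x y
  proof -
    obtain k m :: nat where km: "k \<le> 1" "k = 0 \<longrightarrow> even m" "?d x = - d1 * k + d2 * m"
      using weighted_degree_in_I0[OF \<open>x \<in> I0\<close>] by auto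
    show ?thesis
    proof (cases "y \<in> R")
      case True
      then show ?thesis
        using parity_weights_differ(2)[OF assms(2,3) km(1)] km(2,3) assms(1) \<open>y \<in> I1\<close>
        by (simp add: weighted_degree_in_R)
    next
      case False
      then obtain c :: nat where "odd c" "?d y = d2 * c"
        using weighted_degree_in_I1_minus_R \<open>y \<in> I1\<close> by auto
      then show ?thesis using parity_weights_differ(1)[OF assms(2,3) km(1)] km(2,3) by simp
    qed
  qed
  fix u v assume "{u, v} \<in> E" "u \<noteq> v"
  then obtain x y where "x \<in> I0" "y \<in> I1" "{u, v} = {x, y}"
    using bipartite by (auto simp: bipartite_with_def)
  then show "?d u \<noteq> ?d v" using differ by (metis doubleton_eq_iff)
qed

end

theorem lemma2p3:
  fixes I0 I1 :: "'a set" and E :: "'a set set" and d1 d2 :: real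
  assumes "bipartite_with I0 I1 E"
    and "\<forall>v\<in>I1. degree E v \<ge> 3"
    and "0 < d1" and "d1 < d2"
  shows "\<exists>w. edge_weighting E {-d1, 0, d2} w \<and> proper_weighting E w"
proof -
  have "finite I1" using assms(1) by (simp add: bipartite_with_def simple_graph_def)
  then obtain R where R: "R \<subseteq> I1" "even_on_components E (I1 - R)" "no_common_neighbour E R"
    using exists_no_common_neighbour_even_remainder by blast
  obtain S where S: "S \<subseteq> E" "odd_vertices S = I1 - R"
    using exists_subgraph_with_odd_vertices[OF bipartite_with_finite_edges[OF assms(1)]
        bipartite_with_edges_doubleton[OF assms(1)] _ R(2)] \<open>finite I1\<close>
    by blast
  have "proper_weighting E (parity_weighting d1 d2 R S)"
    using proper_parity_weighting[OF assms(1) R(1,3) S assms(2-4)] .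
  moreover have "edge_weighting E {-d1, 0, d2} (parity_weighting d1 d2 R S)"
    by (simp add: edge_weighting_def parity_weighting_def)
  ultimately show ?thesis by blast
qed

end
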